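(* Let $\mathbf{S}$ be a real symmetric positive semidefinite $p\times p$ matrix, $\lambda_{\mathrm{II}}>0$ and $\lambda_a=\lambda_{\mathrm{II}}^2$. With $\hat{\mathbf{\Omega}}^{\mathrm{II}}(\lambda_{\mathrm{II}})=(\mathbf{S}+\lambda_{\mathrm{II}}\mathbf{I}_p)^{-1}$, $\hat{\mathbf{\Omega}}^{\mathrm{II}a}(\lambda_a)=\{[\lambda_a\mathbf{I}_p+\frac14\mathbf{S}^2]^{1/2}+\frac12\mathbf{S}\}^{-1}$ and $\mathcal{L}(\mathbf{\Omega};\mathbf{S})=\ln|\mathbf{\Omega}|-\mathrm{tr}(\mathbf{S}\mathbf{\Omega})$, one has $$\mathcal{L}[\hat{\mathbf{\Omega}}^{\mathrm{II}}(\lambda_{\mathrm{II}});\mathbf{S}]\le\mathcal{L}[\hat{\mathbf{\Omega}}^{\mathrm{II}a}(\lambda_a);\mathbf{S}].$$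
   Context: $|\cdot|$ is the determinant; $\mathbf{H}^{1/2}$ denotes the unique symmetric positive definite square root of a symmetric positive definite $\mathbf{H}$. *)

theory Defs
  imports "HOL-Analysis.Analysis"
begin

definition symmetric_mat :: "real^'n^'n \<Rightarrow> bool" where
  "symmetric_mat A \<longleftrightarrow> transpose A = A"

definition psd_mat :: "real^'n^'n \<Rightarrow> bool" where
  "psd_mat A \<longleftrightarrow> symmetric_mat A \<and> (\<forall>x. 0 \<le> x \<bullet> (A *v x))"

definition pd_mat :: "real^'n^'n \<Rightarrow> bool" where
  "pd_mat A \<longleftrightarrow> symmetric_mat A \<and> (\<forall>x. x \<noteq> 0 \<longrightarrow> 0 < x \<bullet> (A *v x))"

definition mat_sqrt :: "real^'n^'n \<Rightarrow> real^'n^'n" where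
  "mat_sqrt H = (THE R. pd_mat R \<and> R ** R = H)"

definition loglik :: "real^'n^'n \<Rightarrow> real^'n^'n \<Rightarrow> real" where
  "loglik \<Omega> S = ln (det \<Omega>) - trace (S ** \<Omega>)"

end

theory Submission
  imports Defs
begin

(* Both estimators in the theorem are spectral functions of S: if
   S = Q diag(d) Q^T with Q orthogonal and d >= 0, then
     S + l I                      = Q diag(d_i + l) Q^T,
     (l^2 I + S^2/4)^(1/2) + S/2  = Q diag(r_i) Q^T,  r_i = sqrt(l^2 + d_i^2/4) + d_i/2,
   and for every spectral function Omega = Q diag(w_i) Q^T with w_i > 0
     L(Omega; S) = sum_i (ln w_i - d_i w_i).
   The theorem thus reduces, eigenvalue by eigenvalue, to a scalar fact:
   w |-> ln w - d w is increasing on 0 < w <= 1/d, and 1/(d+l) <= 1/r <= 1/d. *)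

section \<open>The spectral theorem for real symmetric matrices\<close>

lemma symmetric_inner_swap:
  fixes S :: "real^'n^'n"
  assumes "transpose S = S"
  shows "x \<bullet> (S *v y) = (S *v x) \<bullet> y"
  by (metis assms dot_lmul_matrix transpose_matrix_vector)

text \<open>A nonnegative number dominated as \<open>2ta \<le> t\<^sup>2c\<close> for all \<open>t\<close> must vanish;
  this is the first-order condition behind the Rayleigh-quotient argument.\<close>
lemma linear_below_quadratic_imp_zero:
  fixes a c :: real
  assumes a: "0 \<le> a" and dom: "\<And>t. 2 * t * a \<le> t\<^sup>2 * c"
  shows "a = 0"
proof (cases "c \<le> 0")
  case True
  then show ?thesis using dom[of 1] a by simp
next
  case False
  have "2 * (a / c) * a \<le> (a / c)\<^sup>2 * c" by (rule dom)
  then have "2 * a\<^sup>2 / c \<le> a\<^sup>2 / c" using False by (simp add: power2_eq_square field_simps)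
  then have "a\<^sup>2 \<le> 0" using False by (simp add: divide_le_cancel)
  then show ?thesis by simp
qed

text \<open>A unit vector maximising the Rayleigh quotient on an invariant subspace is an
  eigenvector: its residual \<open>y = Sx - mx\<close> stays in the subspace, and perturbing
  \<open>x\<close> along \<open>y\<close> would otherwise increase the quotient.\<close>
lemma rayleigh_maximiser_is_eigenvector:
  fixes S :: "real^'n^'n"
  assumes sym: "transpose S = S" and W: "subspace W"
    and invariant: "\<And>w. w \<in> W \<Longrightarrow> S *v w \<in> W"
    and x: "x \<in> W" "x \<bullet> x = 1"
    and maximal: "\<And>w. w \<in> W \<Longrightarrow> w \<bullet> (S *v w) \<le> (x \<bullet> (S *v x)) * (w \<bullet> w)"
  shows "S *v x = (x \<bullet> (S *v x)) *\<^sub>R x"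
proof -
  define m where "m = x \<bullet> (S *v x)"
  define y where "y = S *v x - m *\<^sub>R x"
  have yW: "y \<in> W"
    unfolding y_def using W invariant x by (intro subspace_diff subspace_scale) auto
  have yx: "y \<bullet> x = 0"
    by (simp add: y_def inner_diff_left x(2) m_def inner_commute[of "S *v x" x])
  have ySx: "y \<bullet> (S *v x) = y \<bullet> y"
    using yx by (simp add: y_def inner_diff_right)
  have xSy: "x \<bullet> (S *v y) = y \<bullet> y"
    using symmetric_inner_swap[OF sym, of x y] ySx by (simp add: inner_commute)
  have "2 * t * (y \<bullet> y) \<le> t\<^sup>2 * (m * (y \<bullet> y) - y \<bullet> (S *v y))" for t
  proof -
    have "x + t *\<^sub>R y \<in> W" using W x yW by (intro subspace_add subspace_scale) auto
    from maximal[OF this]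
    have "(x + t *\<^sub>R y) \<bullet> (S *v (x + t *\<^sub>R y)) \<le> m * ((x + t *\<^sub>R y) \<bullet> (x + t *\<^sub>R y))"
      by (simp add: m_def)
    then show ?thesis
      by (simp add: matrix_vector_right_distrib matrix_vector_mult_scaleR inner_add_left
          inner_add_right m_def[symmetric] x(2) yx inner_commute[of x y] ySx xSy
          power2_eq_square algebra_simps)
  qed
  then have "y \<bullet> y = 0" by (intro linear_below_quadratic_imp_zero) auto
  then show ?thesis by (simp add: y_def m_def)
qed

text \<open>Every nonzero invariant subspace of a symmetric matrix contains a unit
  eigenvector: the Rayleigh quotient attains its maximum on the compact unit
  sphere of the subspace.\<close>
lemma invariant_subspace_has_eigenvector:
  fixes S :: "real^'n^'n"
  assumes sym: "transpose S = S" and W: "subspace W"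
    and invariant: "\<And>w. w \<in> W \<Longrightarrow> S *v w \<in> W"
    and nontrivial: "z \<in> W" "z \<noteq> 0"
  shows "\<exists>x\<in>W. norm x = 1 \<and> (\<exists>\<mu>. S *v x = \<mu> *\<^sub>R x)"
proof -
  define K where "K = sphere 0 1 \<inter> W"
  have "compact K" unfolding K_def
    using W by (intro compact_Int_closed compact_sphere closed_subspace)
  moreover have "z /\<^sub>R norm z \<in> K"
    using nontrivial W by (auto simp: K_def subspace_scale)
  then have "K \<noteq> {}" by auto
  moreover have "continuous_on K (\<lambda>x. x \<bullet> (S *v x))"
    by (intro continuous_intros linear_continuous_on matrix_vector_mul_bounded_linear)
  ultimately obtain x where xK: "x \<in> K"
    and xmax: "\<And>u. u \<in> K \<Longrightarrow> u \<bullet> (S *v u) \<le> x \<bullet> (S *v x)"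
    using continuous_attains_sup by metis
  have xW: "x \<in> W" and xx: "x \<bullet> x = 1" using xK by (auto simp: K_def norm_eq_1)
  have "w \<bullet> (S *v w) \<le> (x \<bullet> (S *v x)) * (w \<bullet> w)" if "w \<in> W" for w
  proof (cases "w = 0")
    case False
    define u where "u = w /\<^sub>R norm w"
    have "u \<in> K" using False that W by (auto simp: K_def u_def subspace_scale)
    then have "u \<bullet> (S *v u) \<le> x \<bullet> (S *v x)" by (rule xmax)
    moreover have "u \<bullet> (S *v u) = (w \<bullet> (S *v w)) / (norm w)\<^sup>2"
      by (simp add: u_def matrix_vector_mult_scaleR power2_eq_square field_simps)
    ultimately show ?thesis
      using False by (simp add: divide_le_eq dot_square_norm power2_eq_square)
  qed simp
  then have "S *v x = (x \<bullet> (S *v x)) *\<^sub>R x"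
    by (intro rayleigh_maximiser_is_eigenvector[OF sym W invariant xW xx])
  then show ?thesis using xW xx by (auto simp: norm_eq_1)
qed

text \<open>A symmetric \<open>n\<times>n\<close> matrix has \<open>k\<close> orthonormal eigenvectors for every
  \<open>k \<le> n\<close>: the orthogonal complement of eigenvectors already found is invariant
  and, while \<open>k < n\<close>, nonzero.\<close>
lemma orthonormal_eigenvectors:
  fixes S :: "real^'n^'n"
  assumes sym: "transpose S = S"
  shows "k \<le> CARD('n) \<Longrightarrow> \<exists>B. finite B \<and> card B = k \<and> pairwise orthogonal B \<and>
           (\<forall>b\<in>B. norm b = 1 \<and> (\<exists>\<mu>. S *v b = \<mu> *\<^sub>R b))"
proof (induction k)
  case 0
  show ?case by (intro exI[of _ "{}"]) auto
next
  case (Suc k)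
  then obtain B where B: "finite B" "card B = k" "pairwise orthogonal B"
    and eig: "\<forall>b\<in>B. norm b = 1 \<and> (\<exists>\<mu>. S *v b = \<mu> *\<^sub>R b)"
    by auto
  define W where "W = {x::real^'n. \<forall>b\<in>B. b \<bullet> x = 0}"
  have W_eq: "W = (\<Inter>b\<in>B. {x. b \<bullet> x = 0})" by (auto simp: W_def)
  have W: "subspace W" unfolding W_eq by (intro subspace_Int subspace_hyperplane)
  have invariant: "S *v w \<in> W" if "w \<in> W" for w
  proof -
    have "b \<bullet> (S *v w) = 0" if "b \<in> B" for b
    proof -
      obtain \<mu> where "S *v b = \<mu> *\<^sub>R b" using eig \<open>b \<in> B\<close> by auto
      then show ?thesis
        using symmetric_inner_swap[OF sym, of b w] \<open>w \<in> W\<close> \<open>b \<in> B\<close> by (simp add: W_def)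
    qed
    then show ?thesis by (simp add: W_def)
  qed
  have "dim B < DIM(real^'n)"
    using dim_le_card[OF span_superset B(1)] B(2) Suc.prems by simp
  then obtain z where z: "z \<noteq> 0" "\<And>y. y \<in> span B \<Longrightarrow> orthogonal z y"
    using orthogonal_to_subspace_exists by blast
  then have "z \<in> W" by (auto simp: W_def orthogonal_def span_base inner_commute)
  then obtain x where x: "x \<in> W" "norm x = 1" "\<exists>\<mu>. S *v x = \<mu> *\<^sub>R x"
    using invariant_subspace_has_eigenvector[OF sym W invariant _ z(1)] by blast
  have "x \<notin> B" using x by (auto simp: W_def norm_eq_1)
  show ?case
  proof (intro exI[of _ "insert x B"] conjI)
    show "card (insert x B) = Suc k" using B \<open>x \<notin> B\<close> by simp
    show "pairwise orthogonal (insert x B)"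
      using B(3) x(1) by (auto simp: pairwise_insert W_def orthogonal_def inner_commute)
  qed (use B eig x in auto)
qed

definition diag_mat :: "real^'n \<Rightarrow> real^'n^'n" where
  "diag_mat v = (\<chi> i j. if i = j then v$i else 0)"

lemma diag_mat_mult_vector: "diag_mat w *v v = (\<chi> i. w$i * v$i)"
  by (simp add: vec_eq_iff diag_mat_def matrix_vector_mult_def if_distrib if_distribR cong: if_cong)

text \<open>The spectral function \<open>g(S) = Q diag(g(d\<^sub>i)) Q\<^sup>T\<close> of a matrix
  \<open>S = Q diag(d) Q\<^sup>T\<close>, given by its eigenbasis \<open>Q\<close> and eigenvalues \<open>d\<close>.\<close>
definition mat_fun :: "real^'n^'n \<Rightarrow> real^'n \<Rightarrow> (real \<Rightarrow> real) \<Rightarrow> real^'n^'n" where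
  "mat_fun Q d g = Q ** diag_mat (\<chi> i. g (d$i)) ** transpose Q"

theorem spectral_theorem:
  fixes S :: "real^'n^'n"
  assumes sym: "transpose S = S"
  shows "\<exists>Q d. orthogonal_matrix Q \<and> S = mat_fun Q d (\<lambda>x. x)"
proof -
  obtain B where B: "finite B" "card B = CARD('n)" "pairwise orthogonal B"
    and eig: "\<forall>b\<in>B. norm b = 1 \<and> (\<exists>\<mu>. S *v b = \<mu> *\<^sub>R b)"
    using orthonormal_eigenvectors[OF sym, of "CARD('n)"] by auto
  obtain f where f: "bij_betw f (UNIV::'n set) B"
    using B by (metis finite_class.finite_UNIV finite_same_card_bij)
  have fB: "f i \<in> B" for i using f by (auto simp: bij_betw_def)
  have [simp]: "norm (f i) = 1" for i using eig fB by auto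
  have [simp]: "i \<noteq> j \<Longrightarrow> orthogonal (f i) (f j)" for i j
    using B(3) f by (auto simp: pairwise_def bij_betw_def inj_on_def)
  define Q where "Q = (\<chi> i j. f j $ i)"
  have oQ: "orthogonal_matrix Q"
    by (simp add: Q_def orthogonal_matrix_orthonormal_columns column_def)
  define d where "d = (\<chi> j. SOME \<mu>. S *v f j = \<mu> *\<^sub>R f j)"
  have Sf: "S *v f j = (d$j) *\<^sub>R f j" for j
    unfolding d_def using eig fB[of j] by simp (rule someI_ex, auto)
  have SQ: "S ** Q = Q ** diag_mat d"
  proof -
    have "(S ** Q)$i$j = (Q ** diag_mat d)$i$j" for i j
    proof -
      have "(S ** Q)$i$j = (S *v f j)$i"
        by (simp add: matrix_matrix_mult_def matrix_vector_mult_def Q_def)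
      also have "\<dots> = f j $ i * d$j" by (simp add: Sf)
      also have "\<dots> = (Q ** diag_mat d)$i$j"
        by (simp add: matrix_matrix_mult_def diag_mat_def Q_def if_distrib if_distribR cong: if_cong)
      finally show ?thesis .
    qed
    then show ?thesis by (simp add: vec_eq_iff)
  qed
  have "S = S ** (Q ** transpose Q)" using oQ by (simp add: orthogonal_matrix_def)
  also have "\<dots> = mat_fun Q d (\<lambda>x. x)" by (simp add: mat_fun_def matrix_mul_assoc SQ)
  finally show ?thesis using oQ by blast
qed

lemma mat_fun_eigenvector:
  fixes Q :: "real^'n^'n"
  assumes oQ: "orthogonal_matrix Q"
  shows "mat_fun Q d g *v (Q *v axis i 1) = g (d$i) *\<^sub>R (Q *v axis i 1)"
    and "Q *v axis i 1 \<noteq> 0"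
proof -
  have QtQ: "transpose Q *v (Q *v v) = v" for v
    using oQ by (simp only: matrix_vector_mul_assoc orthogonal_matrix_def matrix_vector_mul_lid)
  have "diag_mat w *v axis i 1 = w$i *\<^sub>R axis i 1" for w
    by (simp add: diag_mat_mult_vector vec_eq_iff axis_def)
  then show "mat_fun Q d g *v (Q *v axis i 1) = g (d$i) *\<^sub>R (Q *v axis i 1)"
    unfolding mat_fun_def
    by (simp only: matrix_vector_mul_assoc[symmetric] QtQ matrix_vector_mult_scaleR) simp
  show "Q *v axis i 1 \<noteq> 0"
    using QtQ[of "axis i 1"] by auto
qed

lemma mat_fun_quadratic_form:
  "x \<bullet> (mat_fun Q d g *v x) = (\<Sum>i\<in>UNIV. g (d$i) * ((transpose Q *v x)$i)\<^sup>2)"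
proof -
  have "x \<bullet> (mat_fun Q d g *v x)
      = (transpose Q *v x) \<bullet> (diag_mat (\<chi> i. g (d$i)) *v (transpose Q *v x))"
    unfolding mat_fun_def
    by (simp only: matrix_vector_mul_assoc[symmetric] dot_lmul_matrix transpose_matrix_vector)
  then show ?thesis
    by (simp add: inner_vec_def diag_mat_mult_vector power2_eq_square mult_ac
        del: transpose_matrix_vector)
qed

section \<open>Calculus of spectral functions\<close>

lemma mat_fun_cong: "(\<And>i. g (d$i) = h (d$i)) \<Longrightarrow> mat_fun Q d g = mat_fun Q d h"
  by (simp add: mat_fun_def)

lemma diag_mat_mult: "diag_mat a ** diag_mat b = diag_mat (\<chi> i. a$i * b$i)"
  by (simp add: matrix_eq matrix_vector_mul_assoc[symmetric] diag_mat_mult_vector mult.assoc)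

lemma mat_fun_mult:
  assumes "orthogonal_matrix Q"
  shows "mat_fun Q d g ** mat_fun Q d h = mat_fun Q d (\<lambda>x. g x * h x)"
proof -
  have "mat_fun Q d g ** mat_fun Q d h
      = Q ** diag_mat (\<chi> i. g (d$i)) ** (transpose Q ** Q) ** diag_mat (\<chi> i. h (d$i))
          ** transpose Q"
    by (simp add: mat_fun_def matrix_mul_assoc)
  also have "\<dots> = Q ** (diag_mat (\<chi> i. g (d$i)) ** diag_mat (\<chi> i. h (d$i))) ** transpose Q"
    using assms by (simp add: orthogonal_matrix_def matrix_mul_assoc)
  finally show ?thesis by (simp add: diag_mat_mult mat_fun_def)
qed

text \<open>Right distributivity of the matrix product (the library only has the left law).\<close>
lemma matrix_add_rdistrib: "(A + B) ** C = A ** C + B ** (C :: 'a::semiring_1^'n^'m)"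
  by (simp add: vec_eq_iff matrix_matrix_mult_def distrib_right sum.distrib)

lemma mat_fun_add: "mat_fun Q d g + mat_fun Q d h = mat_fun Q d (\<lambda>x. g x + h x)"
proof -
  have diag_add:
    "diag_mat (\<chi> i. g (d$i)) + diag_mat (\<chi> i. h (d$i)) = diag_mat (\<chi> i. g (d$i) + h (d$i))"
    by (simp add: vec_eq_iff diag_mat_def)
  have "mat_fun Q d g + mat_fun Q d h
      = Q ** (diag_mat (\<chi> i. g (d$i)) + diag_mat (\<chi> i. h (d$i))) ** transpose Q"
    by (simp only: mat_fun_def matrix_add_ldistrib matrix_add_rdistrib)
  then show ?thesis by (simp only: diag_add mat_fun_def)
qed

lemma mat_fun_scale: "c *\<^sub>R mat_fun Q d g = mat_fun Q d (\<lambda>x. c * g x)"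
proof -
  have diag_scale: "c *\<^sub>R diag_mat (\<chi> i. g (d$i)) = diag_mat (\<chi> i. c * g (d$i))"
    by (simp add: vec_eq_iff diag_mat_def)
  have "c *\<^sub>R mat_fun Q d g = Q ** (c *\<^sub>R diag_mat (\<chi> i. g (d$i))) ** transpose Q"
    by (simp only: mat_fun_def scalar_matrix_assoc matrix_scalar_ac)
  then show ?thesis by (simp only: diag_scale mat_fun_def)
qed

lemma mat_fun_one:
  assumes "orthogonal_matrix Q"
  shows "mat_fun Q d (\<lambda>x. 1) = mat 1"
proof -
  have diag_one: "diag_mat (\<chi> i. 1) = mat 1" by (simp add: vec_eq_iff diag_mat_def mat_def)
  show ?thesis using assms by (simp add: mat_fun_def orthogonal_matrix_def diag_one)
qed

lemma mat_fun_symmetric: "transpose (mat_fun Q d g) = mat_fun Q d g"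
proof -
  have diag_sym: "transpose (diag_mat v) = diag_mat v" for v
    by (simp add: vec_eq_iff diag_mat_def transpose_def)
  show ?thesis by (simp add: mat_fun_def matrix_transpose_mul matrix_mul_assoc diag_sym)
qed

lemma det_mat_fun:
  assumes "orthogonal_matrix Q"
  shows "det (mat_fun Q d g) = (\<Prod>i\<in>UNIV. g (d$i))"
proof -
  have "det Q * det (transpose Q) = 1"
    using det_orthogonal_matrix[OF assms] by (auto simp: det_transpose)
  moreover have "det (diag_mat (\<chi> i. g (d$i))) = (\<Prod>i\<in>UNIV. g (d$i))"
    by (subst det_diagonal) (auto simp: diag_mat_def)
  ultimately show ?thesis by (simp add: mat_fun_def det_mul)
qed

lemma trace_mat_fun:
  assumes "orthogonal_matrix Q"
  shows "trace (mat_fun Q d g) = (\<Sum>i\<in>UNIV. g (d$i))"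
proof -
  have "trace (mat_fun Q d g) = trace (diag_mat (\<chi> i. g (d$i)) ** (transpose Q ** Q))"
    unfolding mat_fun_def by (metis trace_mul_sym matrix_mul_assoc)
  also have "\<dots> = (\<Sum>i\<in>UNIV. g (d$i))"
    using assms by (simp add: orthogonal_matrix_def trace_def diag_mat_def)
  finally show ?thesis .
qed

lemma matrix_inv_eqI:
  fixes A B :: "real^'n^'n"
  assumes AB: "A ** B = mat 1" and BA: "B ** A = mat 1"
  shows "matrix_inv A = B"
proof -
  have inv: "A ** matrix_inv A = mat 1 \<and> matrix_inv A ** A = mat 1"
    unfolding matrix_inv_def by (rule someI[of _ B]) (use AB BA in auto)
  have "matrix_inv A = matrix_inv A ** (A ** B)" using AB by simp
  also have "\<dots> = B" using inv by (simp add: matrix_mul_assoc)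
  finally show ?thesis .
qed

lemma matrix_inv_mat_fun:
  assumes oQ: "orthogonal_matrix Q" and nz: "\<And>i. g (d$i) \<noteq> 0"
  shows "matrix_inv (mat_fun Q d g) = mat_fun Q d (\<lambda>x. 1 / g x)"
proof (rule matrix_inv_eqI)
  show "mat_fun Q d g ** mat_fun Q d (\<lambda>x. 1 / g x) = mat 1"
    unfolding mat_fun_mult[OF oQ] mat_fun_one[OF oQ, of d, symmetric]
    by (rule mat_fun_cong) (simp add: nz)
  show "mat_fun Q d (\<lambda>x. 1 / g x) ** mat_fun Q d g = mat 1"
    unfolding mat_fun_mult[OF oQ] mat_fun_one[OF oQ, of d, symmetric]
    by (rule mat_fun_cong) (simp add: nz)
qed

lemma pd_mat_fun:
  fixes Q :: "real^'n^'n"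
  assumes oQ: "orthogonal_matrix Q" and pos: "\<And>i. g (d$i) > 0"
  shows "pd_mat (mat_fun Q d g)"
  unfolding pd_mat_def symmetric_mat_def
proof (intro conjI allI impI mat_fun_symmetric)
  fix x :: "real^'n" assume "x \<noteq> 0"
  define y where "y = transpose Q *v x"
  have "Q *v y = x" using oQ
    by (simp add: y_def matrix_vector_mul_assoc orthogonal_matrix_def del: transpose_matrix_vector)
  then have "y \<noteq> 0" using \<open>x \<noteq> 0\<close> by auto
  then obtain i where i: "y$i \<noteq> 0" by (auto simp: vec_eq_iff)
  have "0 < g (d$i) * (y$i)\<^sup>2" using pos[of i] i by simp
  also have "\<dots> \<le> (\<Sum>j\<in>UNIV. g (d$j) * (y$j)\<^sup>2)"
    by (rule member_le_sum) (auto intro!: mult_nonneg_nonneg simp: pos less_imp_le)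
  also have "\<dots> = x \<bullet> (mat_fun Q d g *v x)"
    by (simp only: mat_fun_quadratic_form y_def)
  finally show "0 < x \<bullet> (mat_fun Q d g *v x)" .
qed

text \<open>If \<open>R\<^sub>1\<^sup>2 = R\<^sub>2\<^sup>2\<close>, then for an
  eigenvector \<open>x\<close> of \<open>D = R\<^sub>1 - R\<^sub>2\<close> with eigenvalue \<open>\<mu>\<close> one gets
  \<open>0 = x\<^sup>T(R\<^sub>1D + DR\<^sub>2)x = \<mu> (x\<^sup>TR\<^sub>1x + x\<^sup>TR\<^sub>2x)\<close>, so every eigenvalue of \<open>D\<close> vanishes.\<close>
lemma pd_square_root_unique:
  fixes R1 R2 :: "real^'n^'n"
  assumes p1: "pd_mat R1" and p2: "pd_mat R2" and eq: "R1 ** R1 = R2 ** R2"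
  shows "R1 = R2"
proof -
  have "transpose R1 = R1" "transpose R2 = R2"
    using p1 p2 by (auto simp: pd_mat_def symmetric_mat_def)
  then have "transpose (R1 - R2) = R1 - R2" by (simp add: vec_eq_iff transpose_def)
  then obtain Q \<mu> where oQ: "orthogonal_matrix Q" and D: "R1 - R2 = mat_fun Q \<mu> (\<lambda>x. x)"
    using spectral_theorem by blast
  have "\<mu>$i = 0" for i
  proof -
    define x where "x = Q *v axis i 1"
    have Dx: "(R1 - R2) *v x = \<mu>$i *\<^sub>R x" and "x \<noteq> 0"
      using mat_fun_eigenvector[OF oQ] by (auto simp: D x_def)
    have "R1 *v (R1 *v x) = R2 *v (R2 *v x)" by (simp add: matrix_vector_mul_assoc eq)
    moreover have "R1 *v ((R1 - R2) *v x) + (R1 - R2) *v (R2 *v x)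
        = R1 *v (R1 *v x) - R2 *v (R2 *v x)"
      by (simp add: matrix_vector_mult_diff_rdistrib matrix_vector_mult_diff_distrib)
    ultimately have "0 = x \<bullet> (R1 *v ((R1 - R2) *v x)) + x \<bullet> ((R1 - R2) *v (R2 *v x))"
      by (simp flip: inner_add_right)
    also have "x \<bullet> ((R1 - R2) *v (R2 *v x)) = ((R1 - R2) *v x) \<bullet> (R2 *v x)"
      by (rule symmetric_inner_swap) fact
    finally have "\<mu>$i * (x \<bullet> (R1 *v x) + x \<bullet> (R2 *v x)) = 0"
      by (simp add: Dx matrix_vector_mult_scaleR distrib_left)
    moreover have "x \<bullet> (R1 *v x) + x \<bullet> (R2 *v x) > 0"
      using p1 p2 \<open>x \<noteq> 0\<close> by (auto simp: pd_mat_def intro: add_pos_pos)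
    ultimately show ?thesis by simp
  qed
  then have "R1 - R2 = mat_fun Q \<mu> (\<lambda>x. 0 * x)" unfolding D by (intro mat_fun_cong) simp
  also have "\<dots> = 0 *\<^sub>R mat_fun Q \<mu> (\<lambda>x. x)" by (rule mat_fun_scale[symmetric])
  finally show ?thesis by simp
qed

lemma mat_sqrt_mat_fun:
  assumes oQ: "orthogonal_matrix Q" and pos: "\<And>i. h (d$i) > 0"
  shows "mat_sqrt (mat_fun Q d h) = mat_fun Q d (\<lambda>x. sqrt (h x))"
  unfolding mat_sqrt_def
proof (rule the_equality)
  have root_pd: "pd_mat (mat_fun Q d (\<lambda>x. sqrt (h x)))"
    using pos by (intro pd_mat_fun[OF oQ]) simp
  have root_sq: "mat_fun Q d (\<lambda>x. sqrt (h x)) ** mat_fun Q d (\<lambda>x. sqrt (h x)) = mat_fun Q d h"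
    unfolding mat_fun_mult[OF oQ] by (rule mat_fun_cong) (simp add: pos less_imp_le)
  show "pd_mat (mat_fun Q d (\<lambda>x. sqrt (h x))) \<and>
      mat_fun Q d (\<lambda>x. sqrt (h x)) ** mat_fun Q d (\<lambda>x. sqrt (h x)) = mat_fun Q d h"
    using root_pd root_sq by blast
  show "R = mat_fun Q d (\<lambda>x. sqrt (h x))" if "pd_mat R \<and> R ** R = mat_fun Q d h" for R
    using that root_pd root_sq by (metis pd_square_root_unique)
qed

lemma loglik_mat_fun:
  assumes oQ: "orthogonal_matrix Q" and pos: "\<And>i. h (d$i) > 0"
  shows "loglik (mat_fun Q d h) (mat_fun Q d (\<lambda>x. x))
       = (\<Sum>i\<in>UNIV. ln (h (d$i)) - d$i * h (d$i))"
proof -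
  have "ln (\<Prod>i\<in>UNIV. h (d$i)) = (\<Sum>i\<in>UNIV. ln (h (d$i)))"
    by (rule ln_prod) (simp_all add: pos[THEN less_imp_neq, symmetric])
  then show ?thesis
    by (simp add: loglik_def mat_fun_mult[OF oQ] det_mat_fun[OF oQ] trace_mat_fun[OF oQ]
        sum_subtractf)
qed

text \<open>A positive semidefinite spectral function has nonnegative values on the spectrum:
  \<open>g(d\<^sub>i)\<close> is the Rayleigh quotient of the eigenvector \<open>Q e\<^sub>i\<close>.\<close>
lemma psd_mat_fun_nonneg:
  fixes Q :: "real^'n^'n"
  assumes oQ: "orthogonal_matrix Q" and psd: "psd_mat (mat_fun Q d g)"
  shows "0 \<le> g (d$i)"
proof -
  define x where "x = Q *v axis i 1"
  have "x \<bullet> (mat_fun Q d g *v x) = g (d$i) * (x \<bullet> x)"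
    using mat_fun_eigenvector(1)[OF oQ] by (simp add: x_def)
  moreover have "0 < x \<bullet> x" using mat_fun_eigenvector(2)[OF oQ] by (simp add: x_def)
  moreover have "0 \<le> x \<bullet> (mat_fun Q d g *v x)" using psd by (simp add: psd_mat_def)
  ultimately show ?thesis by (metis not_less zero_le_mult_iff)
qed

section \<open>The scalar inequality\<close>

text \<open>For fixed \<open>d\<close>, the function \<open>w \<mapsto> ln w - d w\<close> increases on \<open>0 < w \<le> 1/d\<close>;
  here it is compared at \<open>w = 1/a\<close> and \<open>w = 1/r\<close> with \<open>d \<le> r \<le> a\<close>.\<close>
lemma log_term_increasing:
  fixes a r d :: real
  assumes r: "0 < r" and ra: "r \<le> a" and dr: "d \<le> r"
  shows "ln (1/a) - d * (1/a) \<le> ln (1/r) - d * (1/r)"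
proof -
  have a: "0 < a" using r ra by linarith
  have "ln (r/a) \<le> r/a - 1" using r a by (intro ln_le_minus_one) simp
  then have log_bound: "ln r - ln a \<le> r/a - 1" using r a by (simp add: ln_div)
  have "d/r - d/a = d * (a - r) / (r * a)" using r a by (simp add: field_simps)
  also have "\<dots> \<le> r * (a - r) / (r * a)"
    using dr ra r a by (intro divide_right_mono mult_right_mono) auto
  also have "\<dots> = 1 - r/a" using r a by (simp add: field_simps)
  finally have "d/r - d/a \<le> 1 - r/a" .
  with log_bound show ?thesis using r a by (simp add: ln_div)
qed

text \<open>The eigenvalues \<open>r = \<surd>(l\<^sup>2 + d\<^sup>2/4) + d/2\<close> of the alternative estimator's inverse
  lie between the eigenvalue \<open>d\<close> of \<open>S\<close> and the eigenvalue \<open>d + l\<close> of \<open>S + lI\<close>.\<close>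
lemma alternative_eigenvalue_bounds:
  fixes d l :: real
  assumes d: "0 \<le> d" and l: "0 < l"
  shows "0 < sqrt (l\<^sup>2 + d\<^sup>2/4) + d/2"
    and "sqrt (l\<^sup>2 + d\<^sup>2/4) + d/2 \<le> d + l"
    and "d \<le> sqrt (l\<^sup>2 + d\<^sup>2/4) + d/2"
proof -
  have "0 < sqrt (l\<^sup>2 + d\<^sup>2/4)" using l by (simp add: add_pos_nonneg)
  then show "0 < sqrt (l\<^sup>2 + d\<^sup>2/4) + d/2" using d by linarith
  have "sqrt (l\<^sup>2 + d\<^sup>2/4) \<le> l + d/2"
    by (rule real_le_lsqrt) (use d l in \<open>auto simp: power2_eq_square algebra_simps\<close>)
  then show "sqrt (l\<^sup>2 + d\<^sup>2/4) + d/2 \<le> d + l" by simp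
  have "d/2 \<le> sqrt (l\<^sup>2 + d\<^sup>2/4)" by (rule real_le_rsqrt) (simp add: power_divide)
  then show "d \<le> sqrt (l\<^sup>2 + d\<^sup>2/4) + d/2" by simp
qed

section \<open>The comparison of the two estimators\<close>

lemma ridge_estimator_mat_fun:
  assumes oQ: "orthogonal_matrix Q" and d: "\<And>i. 0 \<le> d$i" and l: "0 < l"
  shows "matrix_inv (mat_fun Q d (\<lambda>x. x) + l *\<^sub>R mat 1) = mat_fun Q d (\<lambda>x. 1 / (x + l))"
proof -
  have "mat_fun Q d (\<lambda>x. x) + l *\<^sub>R mat 1 = mat_fun Q d (\<lambda>x. x + l)"
    unfolding mat_fun_one[OF oQ, of d, symmetric] mat_fun_scale mat_fun_add by simp
  moreover have "d$i + l \<noteq> 0" for i using d[of i] l by simp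
  ultimately show ?thesis by (simp add: matrix_inv_mat_fun[OF oQ])
qed

lemma alternative_estimator_mat_fun:
  assumes oQ: "orthogonal_matrix Q" and d: "\<And>i. 0 \<le> d$i" and l: "0 < l"
  shows "matrix_inv (mat_sqrt (l\<^sup>2 *\<^sub>R mat 1 + (1/4) *\<^sub>R (mat_fun Q d (\<lambda>x. x) ** mat_fun Q d (\<lambda>x. x)))
           + (1/2) *\<^sub>R mat_fun Q d (\<lambda>x. x))
       = mat_fun Q d (\<lambda>x. 1 / (sqrt (l\<^sup>2 + x\<^sup>2/4) + x/2))"
proof -
  have "l\<^sup>2 *\<^sub>R mat 1 + (1/4) *\<^sub>R (mat_fun Q d (\<lambda>x. x) ** mat_fun Q d (\<lambda>x. x))
      = mat_fun Q d (\<lambda>x. l\<^sup>2 + x\<^sup>2/4)"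
    unfolding mat_fun_one[OF oQ, of d, symmetric] mat_fun_scale mat_fun_mult[OF oQ] mat_fun_add
    by (simp add: power2_eq_square)
  then have "mat_sqrt (l\<^sup>2 *\<^sub>R mat 1 + (1/4) *\<^sub>R (mat_fun Q d (\<lambda>x. x) ** mat_fun Q d (\<lambda>x. x)))
      + (1/2) *\<^sub>R mat_fun Q d (\<lambda>x. x) = mat_fun Q d (\<lambda>x. sqrt (l\<^sup>2 + x\<^sup>2/4) + x/2)"
    using l by (simp add: mat_sqrt_mat_fun[OF oQ] add_pos_nonneg mat_fun_scale mat_fun_add)
  moreover have "sqrt (l\<^sup>2 + (d$i)\<^sup>2/4) + d$i/2 \<noteq> 0" for i
    using alternative_eigenvalue_bounds(1)[OF d l, of i] by simp
  ultimately show ?thesis by (simp add: matrix_inv_mat_fun[OF oQ])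
qed

text \<open>Both estimators are spectral functions of \<open>S\<close>, so their log-likelihoods are
  sums over the spectrum, which compare term by term.\<close>
theorem corollary2:
  fixes S :: "real^'p^'p" and lam_II lam_a :: real
  assumes "psd_mat S"
    and "lam_II > 0"
    and "lam_a = lam_II ^ 2"
  shows "loglik (matrix_inv (S + lam_II *\<^sub>R mat 1)) S
         \<le> loglik (matrix_inv (mat_sqrt (lam_a *\<^sub>R mat 1 + (1/4) *\<^sub>R (S ** S))
                                + (1/2) *\<^sub>R S)) S"
proof -
  obtain Q d where oQ: "orthogonal_matrix Q" and S: "S = mat_fun Q d (\<lambda>x. x)"
    using spectral_theorem[of S] assms(1) unfolding psd_mat_def symmetric_mat_def by blast
  have d: "0 \<le> d$i" for i using psd_mat_fun_nonneg[OF oQ] assms(1) S by fastforce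
  define r where "r x = sqrt (lam_II\<^sup>2 + x\<^sup>2/4) + x/2" for x
  note r_bounds = alternative_eigenvalue_bounds[OF d assms(2), folded r_def]
  have "(\<Sum>i\<in>UNIV. ln (1 / (d$i + lam_II)) - d$i * (1 / (d$i + lam_II)))
      \<le> (\<Sum>i\<in>UNIV. ln (1 / r (d$i)) - d$i * (1 / r (d$i)))"
    by (intro sum_mono log_term_increasing r_bounds)
  moreover have "0 < 1 / (d$i + lam_II)" for i using d[of i] assms(2) by simp
  moreover have "0 < 1 / r (d$i)" for i using r_bounds(1)[of i] by simp
  ultimately show ?thesis
    unfolding assms(3) S ridge_estimator_mat_fun[OF oQ d assms(2)]
      alternative_estimator_mat_fun[OF oQ d assms(2), folded r_def]
    by (simp add: loglik_mat_fun[OF oQ])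
qed

end
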